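(* Let $G$ be a group with finite generating set $T$ (with $T=T^{-1}$, $e\notin T$). Then there exist a group $H$ with a finite generating set $S$ (symmetric, $e\notin S$) and a homomorphism $\phi\colon G\to H$ such that (1) $\phi$ is an isometric embedding with respect to the word metrics of $(G,T)$ and $(H,S)$; (2) $\kappa(\phi(g))<0$ for all $g\in G\smallsetminus\{e\}$. In fact, $\kappa(h)<0$ for all $h\in H\smallsetminus\{e\}$ (curvature with respect to $S$).
   Context: For a group with finite generating set $S$ ($S=S^{-1}$, $e\notin S$), $|x|$ is word length, $\mathrm{Av}(g)=\frac{1}{|S|}\sum_{a\in S}|a^{-1}ga|$, and for $g\neq e$ the curvature is $\kappa(g)=\frac{|g|-\mathrm{Av}(g)}{|g|}$. *)

theory Defs
  imports "HOL-Algebra.Algebra"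
begin

definition fin_sym_gen_set :: "'a monoid \<Rightarrow> 'a set \<Rightarrow> bool" where
  "fin_sym_gen_set G S \<longleftrightarrow> finite S \<and> S \<subseteq> carrier G
     \<and> (\<forall>s\<in>S. inv\<^bsub>G\<^esub> s \<in> S) \<and> \<one>\<^bsub>G\<^esub> \<notin> S
     \<and> generate G S = carrier G"

definition word_prod :: "'a monoid \<Rightarrow> 'a list \<Rightarrow> 'a" where
  "word_prod G ws = foldr (\<lambda>x y. x \<otimes>\<^bsub>G\<^esub> y) ws \<one>\<^bsub>G\<^esub>"

definition word_length :: "'a monoid \<Rightarrow> 'a set \<Rightarrow> 'a \<Rightarrow> nat" where
  "word_length G S g = (LEAST n. \<exists>ws. length ws = n \<and> set ws \<subseteq> S \<and> word_prod G ws = g)"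

definition word_dist :: "'a monoid \<Rightarrow> 'a set \<Rightarrow> 'a \<Rightarrow> 'a \<Rightarrow> nat" where
  "word_dist G S g h = word_length G S (inv\<^bsub>G\<^esub> g \<otimes>\<^bsub>G\<^esub> h)"

definition Av :: "'a monoid \<Rightarrow> 'a set \<Rightarrow> 'a \<Rightarrow> real" where
  "Av G S g = (\<Sum>a\<in>S. real (word_length G S (inv\<^bsub>G\<^esub> a \<otimes>\<^bsub>G\<^esub> g \<otimes>\<^bsub>G\<^esub> a))) / real (card S)"

definition curvature :: "'a monoid \<Rightarrow> 'a set \<Rightarrow> 'a \<Rightarrow> real" where
  "curvature G S g = (real (word_length G S g) - Av G S g) / real (word_length G S g)"

end

theory Submission imports Defs begin

text \<open>
  Embed \<open>G\<close> into the free product \<open>H = G * \<int>/2 * \<dots> * \<int>/2\<close> of \<open>G\<close> with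
  \<open>m = |T| + 5\<close> involutions \<open>r\<^sub>1, \<dots>, r\<^sub>m\<close>, generated by \<open>T\<close> together with the \<open>r\<^sub>k\<close>.
  The length of a reduced word in \<open>H\<close> is the sum of the \<open>T\<close>-lengths of its \<open>G\<close>-syllables
  plus the number of its involutions, so \<open>G\<close> embeds isometrically. Conjugating \<open>h \<noteq> e\<close>
  by a generator shortens it by at most 2, whereas conjugating by an involution that is
  neither the first nor the last letter of \<open>h\<close> lengthens it by exactly 2. At least \<open>m - 2\<close>
  of the at most \<open>|T| + m\<close> generators are of the second kind, so the average length of the
  conjugates exceeds \<open>|h|\<close>, i.e. \<open>\<kappa>(h) < 0\<close>.
\<close>

section \<open>Word length\<close>

lemma word_prod_Nil [simp]: "word_prod G [] = \<one>\<^bsub>G\<^esub>"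
  by (simp add: word_prod_def)

lemma word_prod_Cons [simp]: "word_prod G (x # xs) = x \<otimes>\<^bsub>G\<^esub> word_prod G xs"
  by (simp add: word_prod_def)

lemma word_prod_in_generate: "set ws \<subseteq> A \<Longrightarrow> word_prod G ws \<in> generate G A"
  by (induction ws) (auto intro: generate.one generate.incl generate.eng)

context
  fixes G :: "'a monoid" (structure)
  assumes monoid_G: "monoid G"
begin

interpretation monoid G by (fact monoid_G)

lemma word_prod_closed: "set ws \<subseteq> carrier G \<Longrightarrow> word_prod G ws \<in> carrier G"
  by (induction ws) auto

lemma word_prod_append:
  "set u \<subseteq> carrier G \<Longrightarrow> set v \<subseteq> carrier G \<Longrightarrow>
    word_prod G (u @ v) = word_prod G u \<otimes> word_prod G v"
  by (induction u) (auto simp: word_prod_closed m_assoc)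

end

lemma hom_word_prod:
  assumes "group G" "group H" "f \<in> hom G H" "set ws \<subseteq> carrier G"
  shows "word_prod H (map f ws) = f (word_prod G ws)"
  using assms(4)
proof (induction ws)
  case Nil
  show ?case
    using group_hom.hom_one[of G H f] assms(1-3) by (simp add: group_hom_def group_hom_axioms_def)
next
  case (Cons x ws)
  then show ?case
    using assms(3) word_prod_closed[OF group.is_monoid[OF assms(1)]] by (simp add: hom_mult)
qed

locale fin_gen_group = group G for G :: "'a monoid" (structure) +
  fixes S :: "'a set"
  assumes fin_sym_gen: "fin_sym_gen_set G S"
begin

lemma gens_subset: "S \<subseteq> carrier G"
  and inv_gen: "s \<in> S \<Longrightarrow> inv s \<in> S"
  and one_notin_gens: "\<one> \<notin> S"
  and finite_gens: "finite S"
  and generate_gens: "generate G S = carrier G"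
  using fin_sym_gen by (auto simp: fin_sym_gen_set_def)

lemma word_of_generate: "g \<in> generate G S \<Longrightarrow> \<exists>ws. set ws \<subseteq> S \<and> word_prod G ws = g"
proof (induction rule: generate.induct)
  case one
  show ?case by (intro exI[of _ "[]"]) simp
next
  case (incl h)
  then show ?case using gens_subset by (intro exI[of _ "[h]"]) auto
next
  case (inv h)
  then show ?case using gens_subset inv_gen by (intro exI[of _ "[inv h]"]) auto
next
  case (eng h1 h2)
  then obtain u v where "set u \<subseteq> S" "word_prod G u = h1" "set v \<subseteq> S" "word_prod G v = h2"
    by blast
  then show ?case
    using word_prod_append[OF is_monoid, of u v] gens_subset by (intro exI[of _ "u @ v"]) auto
qed

lemma word_length_attained:
  assumes "g \<in> carrier G"
  obtains ws where "length ws = word_length G S g" "set ws \<subseteq> S" "word_prod G ws = g"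
proof -
  have "\<exists>n ws. length ws = n \<and> set ws \<subseteq> S \<and> word_prod G ws = g"
    using word_of_generate assms generate_gens by blast
  then have "\<exists>ws. length ws = word_length G S g \<and> set ws \<subseteq> S \<and> word_prod G ws = g"
    unfolding word_length_def by (rule LeastI_ex)
  with that show thesis by blast
qed

lemma word_length_le: "set ws \<subseteq> S \<Longrightarrow> word_prod G ws = g \<Longrightarrow> word_length G S g \<le> length ws"
  unfolding word_length_def by (rule Least_le) blast

lemma word_length_one [simp]: "word_length G S \<one> = 0"
  using word_length_le[of "[]"] by simp

lemma word_length_eq_0_iff:
  assumes g: "g \<in> carrier G"
  shows "word_length G S g = 0 \<longleftrightarrow> g = \<one>"
proof
  assume "word_length G S g = 0"
  moreover obtain ws where "length ws = word_length G S g" "word_prod G ws = g"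
    using word_length_attained[OF g] by metis
  ultimately show "g = \<one>" by simp
qed simp

lemma word_length_mult_le:
  assumes g: "g \<in> carrier G" and h: "h \<in> carrier G"
  shows "word_length G S (g \<otimes> h) \<le> word_length G S g + word_length G S h"
proof -
  obtain u where u: "length u = word_length G S g" "set u \<subseteq> S" "word_prod G u = g"
    using word_length_attained[OF g] .
  obtain v where v: "length v = word_length G S h" "set v \<subseteq> S" "word_prod G v = h"
    using word_length_attained[OF h] .
  have "word_prod G (u @ v) = g \<otimes> h"
    using word_prod_append[OF is_monoid, of u v] u v gens_subset by auto
  then show ?thesis
    using word_length_le[of "u @ v"] u v by auto
qed

lemma word_length_gen_le: "s \<in> S \<Longrightarrow> word_length G S s \<le> 1"
  using word_length_le[of "[s]" s] gens_subset by auto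

lemma word_length_le_conj_gen:
  assumes a: "a \<in> S" and h: "h \<in> carrier G"
  shows "word_length G S h \<le> word_length G S (inv a \<otimes> h \<otimes> a) + 2"
proof -
  have a_carr: "a \<in> carrier G" using a gens_subset by auto
  define c where "c = inv a \<otimes> h \<otimes> a"
  have c: "c \<in> carrier G" using a_carr h by (simp add: c_def)
  have "h = a \<otimes> c \<otimes> inv a"
    using a_carr h by (simp add: c_def m_assoc[symmetric]) (simp add: m_assoc)
  then have "word_length G S h \<le> word_length G S a + word_length G S c + word_length G S (inv a)"
    using word_length_mult_le[of "a \<otimes> c" "inv a"] word_length_mult_le[OF a_carr c] a_carr c by simp
  then show ?thesis
    using word_length_gen_le[OF a] word_length_gen_le[OF inv_gen[OF a]] by (simp add: c_def)
qed

lemma curvature_neg_if_many_gens_lengthen: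
  assumes h: "h \<in> carrier G" "h \<noteq> \<one>" and E: "E \<subseteq> S" "card S < 2 * card E"
    and lengthen: "\<And>a. a \<in> E \<Longrightarrow> word_length G S h + 2 \<le> word_length G S (inv a \<otimes> h \<otimes> a)"
  shows "curvature G S h < 0"
proof -
  define n where "n = real (word_length G S h)"
  define c where "c a = real (word_length G S (inv a \<otimes> h \<otimes> a))" for a
  have n_pos: "n > 0"
    using word_length_eq_0_iff[OF h(1)] h(2) by (simp add: n_def)
  have fin_E: "finite E" using E(1) finite_gens finite_subset by blast
  have "real (card (S - E)) * (n - 2) \<le> sum c (S - E)"
    using word_length_le_conj_gen h(1) by (intro sum_bounded_below) (force simp: c_def n_def)
  moreover have "real (card E) * (n + 2) \<le> sum c E"
    using lengthen by (intro sum_bounded_below) (force simp: c_def n_def)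
  moreover have "sum c S = sum c (S - E) + sum c E"
    by (rule sum.subset_diff[OF E(1) finite_gens])
  moreover have "real (card (S - E)) = real (card S) - real (card E)"
    using card_mono[OF finite_gens E(1)] by (simp add: card_Diff_subset[OF fin_E E(1)])
  ultimately have "sum c S \<ge> real (card S) * n + (4 * real (card E) - 2 * real (card S))"
    by (simp add: algebra_simps)
  moreover have "4 * real (card E) - 2 * real (card S) > 0"
    using E(2) by linarith
  ultimately have "sum c S > real (card S) * n"
    by linarith
  moreover have "card S > 0"
    using E card_mono[OF finite_gens E(1)] by linarith
  ultimately have "Av G S h > n"
    by (simp add: Av_def c_def pos_less_divide_eq mult.commute)
  then show ?thesis
    using n_pos by (simp add: curvature_def n_def[symmetric] divide_neg_pos)
qed

end

section \<open>The free product of a group with \<open>m\<close> copies of \<open>\<int>/2\<close>\<close>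

text \<open>
  An element is represented by its reduced word: \<open>Inl g\<close> is a syllable \<open>g \<noteq> \<one>\<close> of \<open>G\<close>,
  \<open>Inr k\<close> (\<open>k < m\<close>) the involution \<open>r\<^sub>k\<close>; no two \<open>G\<close>-syllables and no two equal
  involutions are adjacent. \<open>lmult_letter\<close> multiplies a reduced word on the left
  by one letter (where \<open>Inl \<one>\<close> is allowed).
\<close>

fun lmult_letter :: "'a monoid \<Rightarrow> 'a + nat \<Rightarrow> ('a + nat) list \<Rightarrow> ('a + nat) list" where
  "lmult_letter G (Inl g) w =
     (if g = \<one>\<^bsub>G\<^esub> then w
      else case w of
        Inl h # r \<Rightarrow> if g \<otimes>\<^bsub>G\<^esub> h = \<one>\<^bsub>G\<^esub> then r else Inl (g \<otimes>\<^bsub>G\<^esub> h) # r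
      | _ \<Rightarrow> Inl g # w)"
| "lmult_letter G (Inr k) w =
     (case w of Inr j # r \<Rightarrow> if j = k then r else Inr k # w | _ \<Rightarrow> Inr k # w)"

fun compatible :: "'a + nat \<Rightarrow> 'a + nat \<Rightarrow> bool" where
  "compatible (Inl _) (Inl _) = False"
| "compatible (Inr j) (Inr k) = (j \<noteq> k)"
| "compatible _ _ = True"

definition is_letter :: "'a monoid \<Rightarrow> nat \<Rightarrow> 'a + nat \<Rightarrow> bool" where
  "is_letter G m x = (case x of Inl g \<Rightarrow> g \<in> carrier G | Inr k \<Rightarrow> k < m)"

definition nf_letter :: "'a monoid \<Rightarrow> nat \<Rightarrow> 'a + nat \<Rightarrow> bool" where
  "nf_letter G m x = (is_letter G m x \<and> x \<noteq> Inl \<one>\<^bsub>G\<^esub>)"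

definition normal_form :: "'a monoid \<Rightarrow> nat \<Rightarrow> ('a + nat) list \<Rightarrow> bool" where
  "normal_form G m w = ((\<forall>x\<in>set w. nf_letter G m x) \<and> successively compatible w)"

definition nf_mult :: "'a monoid \<Rightarrow> ('a + nat) list \<Rightarrow> ('a + nat) list \<Rightarrow> ('a + nat) list" where
  "nf_mult G u = foldr (\<lambda>x f. lmult_letter G x \<circ> f) u id"

definition free_prod_involutions :: "'a monoid \<Rightarrow> nat \<Rightarrow> ('a + nat) list monoid" where
  "free_prod_involutions G m = \<lparr>carrier = {w. normal_form G m w}, monoid.mult = nf_mult G, one = []\<rparr>"

definition free_prod_incl :: "'a monoid \<Rightarrow> 'a \<Rightarrow> ('a + nat) list" where
  "free_prod_incl G g = (if g = \<one>\<^bsub>G\<^esub> then [] else [Inl g])"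

definition inv_letter :: "'a monoid \<Rightarrow> 'a + nat \<Rightarrow> 'a + nat" where
  "inv_letter G x = (case x of Inl g \<Rightarrow> Inl (inv\<^bsub>G\<^esub> g) | Inr k \<Rightarrow> Inr k)"

lemma compatible_sym: "compatible x y = compatible y x"
  by (cases x; cases y) auto

lemma compatible_Inl_iff [simp]:
  "compatible (Inl g) y \<longleftrightarrow> \<not> isl y" "compatible y (Inl g) \<longleftrightarrow> \<not> isl y"
  by (cases y; simp)+

lemma compatible_Inr_iff [simp]:
  "compatible (Inr k) y \<longleftrightarrow> y \<noteq> Inr k" "compatible y (Inr k) \<longleftrightarrow> y \<noteq> Inr k"
  by (cases y; auto)+

lemma normal_form_Nil [simp]: "normal_form G m []"
  by (simp add: normal_form_def)

lemma normal_form_Cons: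
  "normal_form G m (x # w) \<longleftrightarrow>
    nf_letter G m x \<and> normal_form G m w \<and> (w = [] \<or> compatible x (hd w))"
  by (auto simp: normal_form_def successively_Cons)

lemma nf_mult_simps [simp]: "nf_mult G [] = id" "nf_mult G (x # u) = lmult_letter G x \<circ> nf_mult G u"
  by (simp_all add: nf_mult_def)

lemma nf_mult_append [simp]: "nf_mult G (u @ v) = nf_mult G u \<circ> nf_mult G v"
  by (induction u) auto

lemma nf_letter_is_letter: "nf_letter G m x \<Longrightarrow> is_letter G m x"
  by (simp add: nf_letter_def)

context
  fixes G :: "'a monoid" (structure)
  assumes group_G: "group G"
begin

interpretation group G by (fact group_G)

lemma normal_form_lmult_letter:
  assumes "normal_form G m w" "is_letter G m x"
  shows "normal_form G m (lmult_letter G x w)"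
  using assms
  by (cases x; cases w; cases "hd w")
     (auto simp: normal_form_Cons nf_letter_def is_letter_def)

lemma lmult_letter_Cons_nf: "normal_form G m (x # w) \<Longrightarrow> lmult_letter G x w = x # w"
  by (cases x; cases w; cases "hd w") (auto simp: normal_form_Cons nf_letter_def is_letter_def)

lemma lmult_letter_Inl_mult:
  assumes w: "normal_form G m w" and g: "g \<in> carrier G" and h: "h \<in> carrier G"
  shows "lmult_letter G (Inl g) (lmult_letter G (Inl h) w) = lmult_letter G (Inl (g \<otimes> h)) w"
proof (cases "w \<noteq> [] \<and> isl (hd w)")
  case True
  then obtain k r where w_eq: "w = Inl k # r" by (cases w; cases "hd w") auto
  with w have k: "k \<in> carrier G" "k \<noteq> \<one>" and r: "r = [] \<or> \<not> isl (hd r)"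
    by (auto simp: normal_form_Cons nf_letter_def is_letter_def)
  have "g \<otimes> h \<otimes> k = g" if "h \<otimes> k = \<one>"
    using that g h k by (simp add: m_assoc)
  moreover have "g \<otimes> (h \<otimes> k) = k" if "g \<otimes> h = \<one>"
    using that g h k by (simp add: m_assoc[symmetric])
  ultimately show ?thesis
    using w_eq r g h k by (cases r; cases "hd r") (auto simp: m_assoc)
next
  case False
  then show ?thesis
    using g h by (cases w) (auto split: sum.splits)
qed

lemma lmult_letter_Inr_Inr: "normal_form G m w \<Longrightarrow> lmult_letter G (Inr k) (lmult_letter G (Inr k) w) = w"
  by (cases w; cases "hd w"; cases "tl w"; cases "hd (tl w)") (auto simp: normal_form_Cons)

lemma normal_form_nf_mult:
  "normal_form G m u \<Longrightarrow> normal_form G m v \<Longrightarrow> normal_form G m (nf_mult G u v)"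
  by (induction u) (auto simp: normal_form_Cons nf_letter_def intro: normal_form_lmult_letter)

lemma nf_mult_lmult_letter:
  assumes w: "normal_form G m w" and v: "normal_form G m v" and x: "is_letter G m x"
  shows "nf_mult G (lmult_letter G x w) v = lmult_letter G x (nf_mult G w v)"
proof (cases w)
  case (Cons y r)
  with w v have r_v: "normal_form G m (nf_mult G r v)"
    by (simp add: normal_form_Cons normal_form_nf_mult)
  show ?thesis
  proof (cases x)
    case (Inl g)
    show ?thesis
    proof (cases y)
      case (Inl k)
      with w x Cons \<open>x = Inl g\<close> have g: "g \<in> carrier G" and k: "k \<in> carrier G"
        by (simp_all add: normal_form_Cons nf_letter_def is_letter_def)
      have "nf_mult G (lmult_letter G x w) v = lmult_letter G (Inl (g \<otimes> k)) (nf_mult G r v)"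
        using Cons \<open>x = Inl g\<close> Inl g k by (cases "g = \<one>") auto
      also have "\<dots> = lmult_letter G x (nf_mult G w v)"
        by (simp only: Cons Inl \<open>x = Inl g\<close> nf_mult_simps o_apply lmult_letter_Inl_mult[OF r_v g k])
      finally show ?thesis .
    qed (use Cons Inl in simp)
  next
    case (Inr n)
    then show ?thesis
      using Cons lmult_letter_Inr_Inr[OF r_v, of n] by (cases y) auto
  qed
qed (cases x; simp)

lemma nf_mult_assoc:
  assumes "normal_form G m u" "normal_form G m v" "normal_form G m w"
  shows "nf_mult G (nf_mult G u v) w = nf_mult G u (nf_mult G v w)"
  using assms(1)
proof (induction u)
  case (Cons x u)
  then have u: "normal_form G m u" and x: "is_letter G m x"
    by (simp_all add: normal_form_Cons nf_letter_is_letter)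
  have "nf_mult G (nf_mult G (x # u) v) w = lmult_letter G x (nf_mult G (nf_mult G u v) w)"
    using nf_mult_lmult_letter[OF normal_form_nf_mult[OF u assms(2)] assms(3) x] by simp
  then show ?case
    using Cons.IH[OF u] by simp
qed simp

lemma nf_mult_Nil_right: "normal_form G m w \<Longrightarrow> nf_mult G w [] = w"
  by (induction w) (auto simp: normal_form_Cons lmult_letter_Cons_nf)

lemma lmult_inv_letter:
  assumes u: "normal_form G m u" and x: "is_letter G m x"
  shows "lmult_letter G (inv_letter G x) (lmult_letter G x u) = u"
proof (cases x)
  case (Inl g)
  with x have g: "g \<in> carrier G" by (simp add: is_letter_def)
  have "lmult_letter G (inv_letter G x) (lmult_letter G x u) = lmult_letter G (Inl (inv g \<otimes> g)) u"
    unfolding Inl inv_letter_def sum.case by (rule lmult_letter_Inl_mult[OF u inv_closed[OF g] g])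
  also have "\<dots> = u"
    using g by simp
  finally show ?thesis .
next
  case (Inr k)
  then show ?thesis
    using lmult_letter_Inr_Inr[OF u] by (simp add: inv_letter_def)
qed

lemma nf_mult_rev_inv_letters:
  assumes "normal_form G m w" "normal_form G m v"
  shows "nf_mult G (rev (map (inv_letter G) w)) (nf_mult G w v) = v"
  using assms
proof (induction w)
  case (Cons x w)
  then have w: "normal_form G m w" and x: "is_letter G m x"
    by (simp_all add: normal_form_Cons nf_letter_is_letter)
  with Cons show ?case
    by (simp add: lmult_inv_letter[OF normal_form_nf_mult[OF w Cons.prems(2)] x])
qed simp

lemma normal_form_rev_inv_letters:
  assumes "normal_form G m w"
  shows "normal_form G m (rev (map (inv_letter G) w))"
proof -
  have "compatible (inv_letter G x) (inv_letter G y) = compatible x y" for x y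
    by (cases x; cases y) (auto simp: inv_letter_def)
  with assms show ?thesis
    by (auto simp: normal_form_def successively_map compatible_sym
        nf_letter_def is_letter_def inv_letter_def split: sum.splits)
qed

lemma group_free_prod_involutions: "group (free_prod_involutions G m)"
proof (rule groupI)
  fix u assume "u \<in> carrier (free_prod_involutions G m)"
  then show "\<exists>v\<in>carrier (free_prod_involutions G m).
      v \<otimes>\<^bsub>free_prod_involutions G m\<^esub> u = \<one>\<^bsub>free_prod_involutions G m\<^esub>"
    using nf_mult_rev_inv_letters[of m u "[]"]
    by (auto intro!: exI[of _ "rev (map (inv_letter G) u)"]
        simp: free_prod_involutions_def nf_mult_Nil_right normal_form_rev_inv_letters)
qed (auto simp: free_prod_involutions_def normal_form_nf_mult nf_mult_assoc)

lemma nf_mult_normal_form_append: "normal_form G m (u @ v) \<Longrightarrow> nf_mult G u v = u @ v"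
  by (induction u) (auto simp: normal_form_Cons lmult_letter_Cons_nf)

lemma free_prod_incl_hom: "free_prod_incl G \<in> hom G (free_prod_involutions G m)"
proof (rule homI)
  fix g h assume g: "g \<in> carrier G" and h: "h \<in> carrier G"
  have "nf_mult G (free_prod_incl G g) = lmult_letter G (Inl g)"
    by (auto simp: free_prod_incl_def)
  then show "free_prod_incl G (g \<otimes> h)
      = free_prod_incl G g \<otimes>\<^bsub>free_prod_involutions G m\<^esub> free_prod_incl G h"
    using lmult_letter_Inl_mult[of m "[]" g h] g h
    by (simp add: free_prod_involutions_def free_prod_incl_def)
qed (auto simp: free_prod_incl_def free_prod_involutions_def normal_form_Cons nf_letter_def is_letter_def)

end

section \<open>Word length in the free product\<close>

definition free_prod_gens :: "'a set \<Rightarrow> nat \<Rightarrow> ('a + nat) list set" where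
  "free_prod_gens S m = (\<lambda>s. [Inl s]) ` S \<union> (\<lambda>k. [Inr k]) ` {..<m}"

definition letter_length :: "'a monoid \<Rightarrow> 'a set \<Rightarrow> 'a + nat \<Rightarrow> nat" where
  "letter_length G S x = (case x of Inl g \<Rightarrow> word_length G S g | Inr _ \<Rightarrow> 1)"

definition nf_length :: "'a monoid \<Rightarrow> 'a set \<Rightarrow> ('a + nat) list \<Rightarrow> nat" where
  "nf_length G S w = sum_list (map (letter_length G S) w)"

lemma nf_length_Nil [simp]: "nf_length G S [] = 0"
  and nf_length_Cons [simp]: "nf_length G S (x # w) = letter_length G S x + nf_length G S w"
  and nf_length_append [simp]: "nf_length G S (u @ v) = nf_length G S u + nf_length G S v"
  by (simp_all add: nf_length_def)

context fin_gen_group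
begin

context
  fixes m :: nat
begin

private abbreviation (input) H where "H \<equiv> free_prod_involutions G m"

lemma group_free_prod: "group H"
  by (rule group_free_prod_involutions[OF is_group])

lemma free_prod_gens_subset: "free_prod_gens S m \<subseteq> carrier H"
  using gens_subset one_notin_gens
  by (auto simp: free_prod_gens_def free_prod_involutions_def normal_form_Cons nf_letter_def is_letter_def)

lemma nf_length_lmult_gen_le:
  assumes v: "normal_form G m v" and x: "[x] \<in> free_prod_gens S m"
  shows "nf_length G S (lmult_letter G x v) \<le> nf_length G S v + 1"
proof (cases x)
  case (Inl s)
  with x have s: "s \<in> S" "s \<in> carrier G" "s \<noteq> \<one>"
    using gens_subset one_notin_gens by (auto simp: free_prod_gens_def)
  have "word_length G S (s \<otimes> k) \<le> word_length G S k + 1" if "k \<in> carrier G" for k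
    using word_length_mult_le[OF s(2) that] word_length_gen_le[OF s(1)] by simp
  with Inl s v word_length_gen_le[OF s(1)] show ?thesis
    by (cases v; cases "hd v") (auto simp: letter_length_def normal_form_Cons nf_letter_def is_letter_def)
next
  case (Inr k)
  then show ?thesis
    by (cases v; cases "hd v") (auto simp: letter_length_def)
qed

lemma nf_length_word_prod_le:
  "set ws \<subseteq> free_prod_gens S m \<Longrightarrow> nf_length G S (word_prod H ws) \<le> length ws"
proof (induction ws)
  case (Cons s ws)
  then have "word_prod H ws \<in> carrier H"
    using word_prod_closed[OF group.is_monoid[OF group_free_prod]] free_prod_gens_subset by auto
  moreover obtain x where "s = [x]" "[x] \<in> free_prod_gens S m"
    using Cons.prems by (auto simp: free_prod_gens_def)
  ultimately show ?case
    using Cons nf_length_lmult_gen_le[of "word_prod H ws" x]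
    by (simp add: free_prod_involutions_def)
qed (simp add: free_prod_involutions_def)

lemma letter_as_word:
  assumes "nf_letter G m x"
  obtains ws where "set ws \<subseteq> free_prod_gens S m" "length ws = letter_length G S x" "word_prod H ws = [x]"
proof (cases x)
  case (Inl g)
  with assms have g: "g \<in> carrier G" "g \<noteq> \<one>" by (auto simp: nf_letter_def is_letter_def)
  obtain ts where ts: "length ts = word_length G S g" "set ts \<subseteq> S" "word_prod G ts = g"
    using word_length_attained[OF g(1)] .
  have "word_prod H (map (free_prod_incl G) ts) = [x]"
    using hom_word_prod[OF is_group group_free_prod free_prod_incl_hom[OF is_group]] ts gens_subset g Inl
    by (auto simp: free_prod_incl_def)
  moreover have "set (map (free_prod_incl G) ts) \<subseteq> free_prod_gens S m"
    using ts one_notin_gens by (auto simp: free_prod_gens_def free_prod_incl_def)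
  moreover have "length (map (free_prod_incl G) ts) = letter_length G S x"
    using ts Inl by (simp add: letter_length_def)
  ultimately show thesis
    using that by blast
next
  case (Inr k)
  with assms that[of "[[Inr k]]"] show thesis
    by (auto simp: nf_letter_def is_letter_def free_prod_gens_def letter_length_def free_prod_involutions_def)
qed

lemma normal_form_as_word:
  "normal_form G m w \<Longrightarrow>
     \<exists>ws. set ws \<subseteq> free_prod_gens S m \<and> length ws = nf_length G S w \<and> word_prod H ws = w"
proof (induction w)
  case (Cons x w)
  then have x: "nf_letter G m x" and w: "normal_form G m w"
    by (simp_all add: normal_form_Cons)
  obtain vs where vs: "set vs \<subseteq> free_prod_gens S m" "length vs = nf_length G S w" "word_prod H vs = w"
    using Cons.IH[OF w] by blast
  obtain us where us: "set us \<subseteq> free_prod_gens S m" "length us = letter_length G S x" "word_prod H us = [x]"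
    using letter_as_word[OF x] .
  have "word_prod H (us @ vs) = [x] \<otimes>\<^bsub>H\<^esub> w"
    using word_prod_append[OF group.is_monoid[OF group_free_prod], of us vs] us vs free_prod_gens_subset
    by auto
  also have "\<dots> = x # w"
    using lmult_letter_Cons_nf[OF is_group Cons.prems] by (simp add: free_prod_involutions_def)
  finally show ?case
    using us vs by (intro exI[of _ "us @ vs"]) simp
qed (auto simp: free_prod_involutions_def)

lemma inv_free_prod_involution: "k < m \<Longrightarrow> inv\<^bsub>H\<^esub> [Inr k] = [Inr k]"
  by (rule group.inv_equality[OF group_free_prod])
     (auto simp: free_prod_involutions_def normal_form_Cons nf_letter_def is_letter_def)

lemma fin_gen_group_free_prod: "fin_gen_group H (free_prod_gens S m)"
proof -
  have "carrier H \<subseteq> generate H (free_prod_gens S m)"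
    using normal_form_as_word word_prod_in_generate by (fastforce simp: free_prod_involutions_def)
  moreover have "\<forall>s\<in>free_prod_gens S m. inv\<^bsub>H\<^esub> s \<in> free_prod_gens S m"
  proof
    fix s assume s: "s \<in> free_prod_gens S m"
    then consider t where "t \<in> S" "s = [Inl t]" | k where "k < m" "s = [Inr k]"
      by (auto simp: free_prod_gens_def)
    then show "inv\<^bsub>H\<^esub> s \<in> free_prod_gens S m"
    proof cases
      case 1
      then have inv_s: "[Inl (inv t)] \<in> free_prod_gens S m"
        using inv_gen by (simp add: free_prod_gens_def)
      have "inv\<^bsub>H\<^esub> s = [Inl (inv t)]"
        using 1 s inv_s free_prod_gens_subset gens_subset one_notin_gens
        by (intro group.inv_equality[OF group_free_prod]) (auto simp: free_prod_involutions_def)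
      with inv_s show ?thesis by simp
    next
      case 2
      with s show ?thesis by (simp add: inv_free_prod_involution)
    qed
  qed
  moreover have "finite (free_prod_gens S m)"
    by (simp add: free_prod_gens_def finite_gens)
  moreover have "\<one>\<^bsub>H\<^esub> \<notin> free_prod_gens S m"
    by (auto simp: free_prod_gens_def free_prod_involutions_def)
  ultimately show ?thesis
    using free_prod_gens_subset group.generate_incl[OF group_free_prod free_prod_gens_subset]
    by (intro fin_gen_group.intro group_free_prod fin_gen_group_axioms.intro)
       (auto simp: fin_sym_gen_set_def)
qed

lemma word_length_free_prod:
  assumes w: "normal_form G m w"
  shows "word_length H (free_prod_gens S m) w = nf_length G S w"
proof -
  interpret H: fin_gen_group H "free_prod_gens S m"
    by (rule fin_gen_group_free_prod)
  have "word_length H (free_prod_gens S m) w \<le> nf_length G S w"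
    using normal_form_as_word[OF w] H.word_length_le by fastforce
  moreover obtain vs where "length vs = word_length H (free_prod_gens S m) w"
      "set vs \<subseteq> free_prod_gens S m" "word_prod H vs = w"
    using H.word_length_attained w by (auto simp: free_prod_involutions_def)
  then have "nf_length G S w \<le> word_length H (free_prod_gens S m) w"
    using nf_length_word_prod_le by fastforce
  ultimately show ?thesis by simp
qed

lemma word_length_free_prod_incl:
  "g \<in> carrier G \<Longrightarrow> word_length H (free_prod_gens S m) (free_prod_incl G g) = word_length G S g"
  using word_length_free_prod[of "free_prod_incl G g"]
  by (auto simp: free_prod_incl_def normal_form_Cons nf_letter_def is_letter_def letter_length_def)

lemma word_dist_free_prod_incl:
  assumes g: "g \<in> carrier G" and g': "g' \<in> carrier G"
  shows "word_dist H (free_prod_gens S m) (free_prod_incl G g) (free_prod_incl G g') = word_dist G S g g'"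
proof -
  interpret incl: group_hom G H "free_prod_incl G"
    by (intro group_hom.intro group_hom_axioms.intro is_group group_free_prod free_prod_incl_hom[OF is_group])
  show ?thesis
    using word_length_free_prod_incl[of "inv g \<otimes> g'"] g g' by (simp add: word_dist_def)
qed

lemma word_length_conj_free_involution:
  assumes h: "normal_form G m h" "h \<noteq> []" and k: "k < m" "hd h \<noteq> Inr k" "last h \<noteq> Inr k"
  shows "word_length H (free_prod_gens S m) (inv\<^bsub>H\<^esub> [Inr k] \<otimes>\<^bsub>H\<^esub> h \<otimes>\<^bsub>H\<^esub> [Inr k])
     = word_length H (free_prod_gens S m) h + 2"
proof -
  have conj_nf: "normal_form G m (Inr k # h @ [Inr k])"
    using h k by (auto simp: normal_form_def nf_letter_def is_letter_def successively_append_iff successively_Cons)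
  then have "normal_form G m (h @ [Inr k])"
    by (simp add: normal_form_Cons)
  then have "inv\<^bsub>H\<^esub> [Inr k] \<otimes>\<^bsub>H\<^esub> h \<otimes>\<^bsub>H\<^esub> [Inr k] = Inr k # h @ [Inr k]"
    using conj_nf h(1) k(1) group.inv_closed[OF group_free_prod, of "[Inr k]"]
      inv_free_prod_involution[OF k(1)] monoid.m_assoc[OF group.is_monoid[OF group_free_prod], of "[Inr k]" h "[Inr k]"]
      nf_mult_normal_form_append[OF is_group, of m "[Inr k]" "h @ [Inr k]"]
      nf_mult_normal_form_append[OF is_group, of m h "[Inr k]"]
    by (simp add: free_prod_involutions_def normal_form_Cons nf_letter_def is_letter_def)
  then show ?thesis
    using word_length_free_prod[OF conj_nf] word_length_free_prod[OF h(1)] by (simp add: letter_length_def)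
qed

lemma curvature_free_prod_neg:
  assumes m: "card S + 4 < m" and h: "h \<in> carrier H" "h \<noteq> \<one>\<^bsub>H\<^esub>"
  shows "curvature H (free_prod_gens S m) h < 0"
proof -
  interpret H: fin_gen_group H "free_prod_gens S m"
    by (rule fin_gen_group_free_prod)
  have h_nf: "normal_form G m h" and h_ne: "h \<noteq> []"
    using h by (simp_all add: free_prod_involutions_def)
  \<comment> \<open>When an end of \<open>h\<close> is a \<open>G\<close>-syllable, \<open>projr\<close> of it is an unspecified number,
    which is then excluded needlessly but harmlessly.\<close>
  define E :: "('a + nat) list set"
    where "E = (\<lambda>k. [Inr k]) ` ({..<m} - {projr (hd h), projr (last h)})"
  have E_gens: "E \<subseteq> free_prod_gens S m"
    by (auto simp: E_def free_prod_gens_def)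
  have "card (free_prod_gens S m) \<le> card S + m"
    unfolding free_prod_gens_def
    by (rule order_trans[OF card_Un_le add_mono[OF card_image_le[OF finite_gens]]])
       (simp add: card_image inj_on_def)
  moreover have "m - 2 \<le> card E"
  proof -
    have "card {..<m} - card {projr (hd h), projr (last h)} \<le> card E"
      unfolding E_def using diff_card_le_card_Diff[of "{projr (hd h), projr (last h)}" "{..<m}"]
      by (subst card_image) (simp_all add: inj_on_def)
    moreover have "card {projr (hd h), projr (last h)} \<le> 2"
      by (simp add: card_insert_if)
    ultimately show ?thesis by simp
  qed
  ultimately have "card (free_prod_gens S m) < 2 * card E"
    using m by linarith
  moreover have "word_length H (free_prod_gens S m) h + 2
      \<le> word_length H (free_prod_gens S m) (inv\<^bsub>H\<^esub> a \<otimes>\<^bsub>H\<^esub> h \<otimes>\<^bsub>H\<^esub> a)" if "a \<in> E" for a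
  proof -
    obtain k where "k < m" "hd h \<noteq> Inr k" "last h \<noteq> Inr k" "a = [Inr k]"
      using \<open>a \<in> E\<close> by (force simp: E_def)
    then show ?thesis
      using word_length_conj_free_involution[OF h_nf h_ne] by simp
  qed
  ultimately show ?thesis
    using H.curvature_neg_if_many_gens_lengthen[OF h E_gens] by blast
qed

end

end

theorem mainTheorem12:
  fixes G :: "'a monoid" and T :: "'a set"
  assumes "group G" and "fin_sym_gen_set G T"
  shows "\<exists>(H :: ('a + nat) list monoid) S \<phi>.
           group H \<and> fin_sym_gen_set H S \<and> \<phi> \<in> hom G H
         \<and> (\<forall>g\<in>carrier G. \<forall>g'\<in>carrier G. word_dist H S (\<phi> g) (\<phi> g') = word_dist G T g g')
         \<and> (\<forall>g\<in>carrier G - {\<one>\<^bsub>G\<^esub>}. curvature H S (\<phi> g) < 0)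
         \<and> (\<forall>h\<in>carrier H - {\<one>\<^bsub>H\<^esub>}. curvature H S h < 0)"
proof -
  interpret fin_gen_group G T
    using assms by (rule fin_gen_group.intro[OF _ fin_gen_group_axioms.intro])
  define m where "m = card T + 5"
  let ?H = "free_prod_involutions G m" and ?S = "free_prod_gens T m"
  interpret H: fin_gen_group ?H ?S
    by (rule fin_gen_group_free_prod)
  have "\<forall>h\<in>carrier ?H - {\<one>\<^bsub>?H\<^esub>}. curvature ?H ?S h < 0"
    using curvature_free_prod_neg by (simp add: m_def)
  moreover have "free_prod_incl G g \<in> carrier ?H - {\<one>\<^bsub>?H\<^esub>}"
    if "g \<in> carrier G - {\<one>\<^bsub>G\<^esub>}" for g
    using that free_prod_incl_hom[OF is_group, of m]
    by (auto simp: free_prod_incl_def free_prod_involutions_def dest: hom_in_carrier)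
  ultimately show ?thesis
    using H.is_group H.fin_sym_gen free_prod_incl_hom[OF is_group] word_dist_free_prod_incl
    by (intro exI[of _ ?H] exI[of _ ?S] exI[of _ "free_prod_incl G"]) blast
qed

end
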